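(* Let $G$ be a group, $\alpha\colon G^3\to\mathrm{U}(1)$ a normalized 3-cocycle, and $g\in G$ an element of order $n$. Let $\tilde\rho\colon\mathbb{Z}^2\to G$ be the homomorphism with $\tilde\rho(\mathsf e_1)=g$, $\tilde\rho(\mathsf e_2)=1$, and let $\tilde\gamma\colon\mathbb{Z}^2\times\mathbb{Z}^2\to\mathrm{U}(1)$ be a normalized 2-cochain with $d\tilde\gamma=\tilde\rho^*\alpha$ and $\tilde\gamma(\mathsf e_1,\mathsf e_2)=\tilde\gamma(\mathsf e_2,\mathsf e_1)$. For $A=\begin{pmatrix}a&b\\c&d\end{pmatrix}$ in the stabilizer of $\tilde\rho$ in $\mathrm{SL}_2(\mathbb{Z})$ put $$R_{\tilde\rho}(A)=\frac{\tilde\gamma(b\mathsf e_1+d\mathsf e_2,\ a\mathsf e_1+c\mathsf e_2)}{\tilde\gamma(a\mathsf e_1+c\mathsf e_2,\ b\mathsf e_1+d\mathsf e_2)}.$$ Then for $T^n=\begin{pmatrix}1&n\\0&1\end{pmatrix}$, $$R_{\tilde\rho}(T^n)=\prod_{j=0}^{n-1}\alpha(g,g^j,g)^{-1}.$$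
   Context: $\mathsf e_1,\mathsf e_2$ is the standard basis of $\mathbb{Z}^2=\pi_1(\mathbb{T}^2)$; $\mathrm{SL}_2(\mathbb{Z})$ acts on homomorphisms by $(A^*\tilde\rho)(\mathsf e_1)=\tilde\rho(\mathsf e_1)^a\tilde\rho(\mathsf e_2)^c$, $(A^*\tilde\rho)(\mathsf e_2)=\tilde\rho(\mathsf e_1)^b\tilde\rho(\mathsf e_2)^d$, and $T^n$ stabilizes $\tilde\rho$. Group cochain conventions (additive notation in $\mathbb{Z}^2$): $(d\tilde\gamma)(x,y,z)=\tilde\gamma(y,z)\tilde\gamma(x+y,z)^{-1}\tilde\gamma(x,y+z)\tilde\gamma(x,y)^{-1}$ and $\tilde\rho^*\alpha(x,y,z)=\alpha(\tilde\rho x,\tilde\rho y,\tilde\rho z)$; normalized means $\tilde\gamma(0,x)=\tilde\gamma(x,0)=1$. The value $R_{\tilde\rho}(A)$ is the character of the stabilizer describing the mapping-class-group action on the fiber of the Freed–Quinn line over the $G$-bundle with holonomy $\tilde\rho$. *)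

theory Defs
  imports Complex_Main "HOL-Library.Product_Plus" "HOL-Algebra.Multiplicative_Group"
begin

text \<open>U(1)-valued functions are modelled as complex-valued functions with values of norm 1.
  The lattice Z^2 is int \<times> int, with e1 = (1,0), e2 = (0,1).\<close>

definition normalized_3cocycle ::
  "('g, 'b) monoid_scheme \<Rightarrow> ('g \<Rightarrow> 'g \<Rightarrow> 'g \<Rightarrow> complex) \<Rightarrow> bool" where
  "normalized_3cocycle G \<alpha> \<longleftrightarrow>
     (\<forall>x\<in>carrier G. \<forall>y\<in>carrier G. \<forall>z\<in>carrier G. cmod (\<alpha> x y z) = 1) \<and>
     (\<forall>x\<in>carrier G. \<forall>y\<in>carrier G. \<forall>z\<in>carrier G. \<forall>w\<in>carrier G.
        \<alpha> y z w * inverse (\<alpha> (x \<otimes>\<^bsub>G\<^esub> y) z w) * \<alpha> x (y \<otimes>\<^bsub>G\<^esub> z) w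
          * inverse (\<alpha> x y (z \<otimes>\<^bsub>G\<^esub> w)) * \<alpha> x y z = 1) \<and>
     (\<forall>x\<in>carrier G. \<forall>y\<in>carrier G.
        \<alpha> \<one>\<^bsub>G\<^esub> x y = 1 \<and> \<alpha> x \<one>\<^bsub>G\<^esub> y = 1 \<and> \<alpha> x y \<one>\<^bsub>G\<^esub> = 1)"

definition normalized_2cochain :: "(int \<times> int \<Rightarrow> int \<times> int \<Rightarrow> complex) \<Rightarrow> bool" where
  "normalized_2cochain \<gamma> \<longleftrightarrow> (\<forall>x y. cmod (\<gamma> x y) = 1) \<and> (\<forall>x. \<gamma> (0,0) x = 1 \<and> \<gamma> x (0,0) = 1)"

definition cobound2 :: "(int \<times> int \<Rightarrow> int \<times> int \<Rightarrow> complex) \<Rightarrow> int \<times> int \<Rightarrow> int \<times> int \<Rightarrow> int \<times> int \<Rightarrow> complex" where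
  "cobound2 \<gamma> x y z = \<gamma> y z * inverse (\<gamma> (x + y) z) * \<gamma> x (y + z) * inverse (\<gamma> x y)"

definition R_rho :: "(int \<times> int \<Rightarrow> int \<times> int \<Rightarrow> complex) \<Rightarrow> int \<Rightarrow> int \<Rightarrow> int \<Rightarrow> int \<Rightarrow> complex" where
  "R_rho \<gamma> a b c d = \<gamma> (b, d) (a, c) / \<gamma> (a, c) (b, d)"

end

theory Submission
  imports Defs
begin

text \<open>Write c(x, y) = \<gamma>(x, y) / \<gamma>(y, x), so that R(T^n) = c(n e1 + e2, e1). Wherever the
  coboundary of \<gamma> is trivial, c is multiplicative in its first argument, and d\<gamma> = \<rho>^*\<alpha> is
  trivial on every triple containing an element of the kernel of \<rho>, such as e2. Hence
  c(n e1 + e2, e1) = c(n e1, e1) c(e2, e1) = c(n e1, e1), the last factor being 1 by the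
  symmetry of \<gamma> on e1, e2. Finally each step k e1 \<mapsto> (k+1) e1 multiplies c(-, e1) by
  \<alpha>(g, g^k, g)^-1, as one instance of d\<gamma> = \<rho>^*\<alpha> shows.\<close>

definition cochain_comm :: "('a \<Rightarrow> 'a \<Rightarrow> 'c::field) \<Rightarrow> 'a \<Rightarrow> 'a \<Rightarrow> 'c" where
  "cochain_comm \<gamma> x y = \<gamma> x y / \<gamma> y x"

lemma cochain_comm_add_left:
  fixes \<gamma> :: "'a::ab_group_add \<Rightarrow> 'a \<Rightarrow> 'c::field"
  assumes nz: "\<And>u v. \<gamma> u v \<noteq> 0"
    and xyz: "\<gamma> y z * \<gamma> x (y + z) = \<gamma> (x + y) z * \<gamma> x y"
    and xzy: "\<gamma> z y * \<gamma> x (z + y) = \<gamma> (x + z) y * \<gamma> x z"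
    and zxy: "\<gamma> x y * \<gamma> z (x + y) = \<gamma> (z + x) y * \<gamma> z x"
  shows "cochain_comm \<gamma> (x + y) z = cochain_comm \<gamma> x z * cochain_comm \<gamma> y z"
proof -
  have "(\<gamma> (x + y) z * \<gamma> z y * \<gamma> z x) * (\<gamma> x y * \<gamma> (x + z) y)
      = (\<gamma> (x + y) z * \<gamma> x y) * \<gamma> z y * (\<gamma> (z + x) y * \<gamma> z x)"
    by (simp only: add.commute[of z x] mult_ac)
  also have "\<dots> = (\<gamma> y z * \<gamma> x (y + z)) * \<gamma> z y * (\<gamma> x y * \<gamma> z (x + y))"
    by (simp only: xyz zxy)
  also have "\<dots> = \<gamma> y z * (\<gamma> z y * \<gamma> x (z + y)) * \<gamma> x y * \<gamma> z (x + y)"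
    by (simp add: add.commute mult_ac)
  also have "\<dots> = (\<gamma> y z * \<gamma> x z * \<gamma> z (x + y)) * (\<gamma> x y * \<gamma> (x + z) y)"
    by (simp add: xzy mult_ac)
  finally have "\<gamma> (x + y) z * \<gamma> z y * \<gamma> z x = \<gamma> y z * \<gamma> x z * \<gamma> z (x + y)"
    using nz by simp
  then show ?thesis
    using nz by (simp add: cochain_comm_def field_simps)
qed

locale trivializing_cochain = group G for G :: "('g, 'b) monoid_scheme" (structure) +
  fixes \<alpha> :: "'g \<Rightarrow> 'g \<Rightarrow> 'g \<Rightarrow> complex"
    and g :: 'g
    and \<rho> :: "int \<times> int \<Rightarrow> 'g"
    and \<gamma> :: "int \<times> int \<Rightarrow> int \<times> int \<Rightarrow> complex"
  assumes g_in: "g \<in> carrier G"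
    and rho: "\<And>k l. \<rho> (k, l) = g [^] k"
    and alpha: "normalized_3cocycle G \<alpha>"
    and gamma_nonzero: "\<And>x y. \<gamma> x y \<noteq> 0"
    and coboundary: "\<And>x y z. cobound2 \<gamma> x y z = \<alpha> (\<rho> x) (\<rho> y) (\<rho> z)"
begin

lemma rho_in_carrier: "\<rho> x \<in> carrier G"
  using g_in by (cases x) (simp add: rho)

lemma rho_e2 [simp]: "\<rho> (0, 1) = \<one>"
  by (simp add: rho)

lemma rho_zero [simp]: "\<rho> 0 = \<one>"
  by (simp add: zero_prod_def rho)

lemma alpha_nonzero: "\<alpha> (\<rho> x) (\<rho> y) (\<rho> z) \<noteq> 0"
  using alpha rho_in_carrier unfolding normalized_3cocycle_def by (metis norm_zero zero_neq_one)

lemma coboundary_eq_mult: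
  "\<gamma> y z * \<gamma> x (y + z) = \<alpha> (\<rho> x) (\<rho> y) (\<rho> z) * \<gamma> (x + y) z * \<gamma> x y"
proof -
  have "\<gamma> y z * inverse (\<gamma> (x + y) z) * \<gamma> x (y + z) * inverse (\<gamma> x y)
      = \<alpha> (\<rho> x) (\<rho> y) (\<rho> z)"
    using coboundary[of x y z] unfolding cobound2_def .
  then show ?thesis
    using gamma_nonzero[of "x + y" z] gamma_nonzero[of x y] by (auto simp: field_simps)
qed

lemma coboundary_trivial_on_kernel:
  assumes "\<rho> x = \<one> \<or> \<rho> y = \<one> \<or> \<rho> z = \<one>"
  shows "\<gamma> y z * \<gamma> x (y + z) = \<gamma> (x + y) z * \<gamma> x y"
proof -
  have "\<alpha> (\<rho> x) (\<rho> y) (\<rho> z) = 1"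
    using assms alpha rho_in_carrier[of x] rho_in_carrier[of y] rho_in_carrier[of z]
    unfolding normalized_3cocycle_def by auto
  then show ?thesis
    using coboundary_eq_mult by simp
qed

lemma comm_add_kernel_left:
  assumes "\<rho> y = \<one>"
  shows "cochain_comm \<gamma> (x + y) z = cochain_comm \<gamma> x z * cochain_comm \<gamma> y z"
  using assms by (intro cochain_comm_add_left gamma_nonzero coboundary_trivial_on_kernel) simp_all

lemma comm_zero_left: "cochain_comm \<gamma> 0 z = 1"
proof -
  have "cochain_comm \<gamma> 0 z = cochain_comm \<gamma> 0 z * cochain_comm \<gamma> 0 z"
    using comm_add_kernel_left[of 0 0 z] by simp
  moreover have "cochain_comm \<gamma> 0 z \<noteq> 0"
    using gamma_nonzero by (simp add: cochain_comm_def)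
  ultimately show ?thesis
    by simp
qed

lemma comm_add_e1:
  "cochain_comm \<gamma> (x + (1, 0)) (1, 0) = cochain_comm \<gamma> x (1, 0) * inverse (\<alpha> g (\<rho> x) g)"
proof -
  have "\<gamma> x (1, 0) * \<gamma> (1, 0) (x + (1, 0))
      = \<alpha> g (\<rho> x) g * \<gamma> (x + (1, 0)) (1, 0) * \<gamma> (1, 0) x"
    using coboundary_eq_mult[where x = "(1, 0)" and y = x and z = "(1, 0)"] g_in
    by (simp add: rho add.commute)
  then show ?thesis
    using gamma_nonzero alpha_nonzero[of "(1, 0)" x "(1, 0)"] g_in
    by (simp add: cochain_comm_def rho field_simps)
qed

lemma comm_multiple_e1:
  "cochain_comm \<gamma> (int k, 0) (1, 0) = (\<Prod>j<k. inverse (\<alpha> g (g [^] j) g))"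
proof (induction k)
  case 0
  then show ?case
    using comm_zero_left by (simp add: zero_prod_def)
next
  case (Suc k)
  have "cochain_comm \<gamma> (int (Suc k), 0) (1, 0) = cochain_comm \<gamma> ((int k, 0) + (1, 0)) (1, 0)"
    by (simp add: add.commute)
  also have "\<dots> = cochain_comm \<gamma> (int k, 0) (1, 0) * inverse (\<alpha> g (g [^] k) g)"
    using comm_add_e1[of "(int k, 0)"] by (simp add: rho int_pow_int)
  finally show ?case
    using Suc.IH by simp
qed

end

theorem mainTheorem13:
  fixes G :: "('g, 'b) monoid_scheme"
    and \<alpha> :: "'g \<Rightarrow> 'g \<Rightarrow> 'g \<Rightarrow> complex"
    and g :: 'g and n :: nat
    and \<rho> :: "int \<times> int \<Rightarrow> 'g"
    and \<gamma> :: "int \<times> int \<Rightarrow> int \<times> int \<Rightarrow> complex"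
  assumes grp: "group G"
    and coc: "normalized_3cocycle G \<alpha>"
    and g_in: "g \<in> carrier G"
    and n_pos: "n > 0"
    and ord_g: "group.ord G g = n"
    and rho_def: "\<And>k l. \<rho> (k, l) = g [^]\<^bsub>G\<^esub> k"
    and gam: "normalized_2cochain \<gamma>"
    and dgam: "\<And>x y z. cobound2 \<gamma> x y z = \<alpha> (\<rho> x) (\<rho> y) (\<rho> z)"
    and sym12: "\<gamma> (1, 0) (0, 1) = \<gamma> (0, 1) (1, 0)"
  shows "R_rho \<gamma> 1 (int n) 0 1 = (\<Prod>j<n. inverse (\<alpha> g (g [^]\<^bsub>G\<^esub> j) g))"
proof -
  \<comment> \<open>The order of g only makes T^n stabilize \<rho>; the identity holds for every n.\<close>
  have gamma_nonzero: "\<gamma> x y \<noteq> 0" for x y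
    using gam unfolding normalized_2cochain_def by (metis norm_zero zero_neq_one)
  interpret trivializing_cochain G \<alpha> g \<rho> \<gamma>
    using grp g_in rho_def coc gamma_nonzero dgam
    by (simp add: trivializing_cochain_def trivializing_cochain_axioms_def)
  have "R_rho \<gamma> 1 (int n) 0 1 = cochain_comm \<gamma> ((int n, 0) + (0, 1)) (1, 0)"
    by (simp add: R_rho_def cochain_comm_def)
  also have "\<dots> = cochain_comm \<gamma> (int n, 0) (1, 0) * cochain_comm \<gamma> (0, 1) (1, 0)"
    by (rule comm_add_kernel_left) simp
  also have "cochain_comm \<gamma> (0, 1) (1, 0) = 1"
    using sym12 gamma_nonzero by (simp add: cochain_comm_def)
  finally show ?thesis
    using comm_multiple_e1 by simp
qed

end
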